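(* Let $(\mathcal X,d)$ be a metric space, $f:[n]\to\mathcal X$ a feature and $1\le k\le n$. Let $\mathcal R_{k,n}$ be the distribution of a multiset $S=\{i_1,\dots,i_k\}$ obtained by drawing $i_1,\dots,i_k$ independently and uniformly from $[n]$ (sampling with replacement). Then $$\mathbb E_{S\sim\mathcal U_{k,n}}\big[W(\phi_f^{[n]},\phi_f^S)\big]\le\mathbb E_{S\sim\mathcal R_{k,n}}\big[W(\phi_f^{[n]},\phi_f^S)\big].$$
   Context: For a nonempty set or multiset $S$ of elements of $[n]$, $\phi_f^S=\frac1{|S|}\sum_{i\in S}\delta(f(i))$ (counted with multiplicity), where $\delta(\cdot)$ is a Dirac mass. For finitely supported distributions $\phi,\psi$ on $\mathcal X$, $W(\phi,\psi)=\min_{\gamma}\mathbb E_{(x,y)\sim\gamma}[d(x,y)]$, minimum over couplings $\gamma$ of $\phi,\psi$ (Wasserstein-1 distance). $\mathcal U_{k,n}$ is the uniform distribution over size-$k$ subsets of $[n]$ (sampling without replacement). *)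

theory Defs
  imports "HOL-Probability.Probability" "HOL-Probability.Product_PMF"
begin

definition emp_dist :: "(nat \<Rightarrow> 'a) \<Rightarrow> nat multiset \<Rightarrow> 'a pmf" where
  "emp_dist f S = map_pmf f (pmf_of_multiset S)"

definition wasserstein1 :: "'a::metric_space pmf \<Rightarrow> 'a pmf \<Rightarrow> real" where
  "wasserstein1 p q = Inf {measure_pmf.expectation \<gamma> (\<lambda>(x, y). dist x y) | \<gamma>.
      map_pmf fst \<gamma> = p \<and> map_pmf snd \<gamma> = q}"

definition unif_subsets :: "nat \<Rightarrow> nat \<Rightarrow> nat set pmf" where
  "unif_subsets k n = pmf_of_set {S. S \<subseteq> {1..n} \<and> card S = k}"

definition repl_multisets :: "nat \<Rightarrow> nat \<Rightarrow> nat multiset pmf" where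
  "repl_multisets k n = map_pmf (\<lambda>g. image_mset g (mset_set {0..<k}))
      (Pi_pmf {0..<k} 0 (\<lambda>_. pmf_of_set {1..n}))"

end

(*
  Both expectations are unchanged when [n] is relabelled by a uniformly random permutation
  \<sigma>.  Fix a with-replacement draw v and a k-set T containing its values.  The uniform
  distribution on T is the average, over uniformly random permutations \<rho> of T, of the
  image under \<rho> of the empirical distribution of v.  As W(P, -) is convex under such
  mixtures and \<sigma> \<circ> \<rho> is again uniformly distributed, the \<sigma>-average of
  W(P, -) for T, which is the left-hand side, is at most the \<sigma>-average for v.
  Averaging over v gives the right-hand side.
*)

theory Submission
  imports Defs "HOL-Combinatorics.Permutations"
begin

lemma bdd_below_coupling_costs:
  "bdd_below {measure_pmf.expectation \<gamma> (\<lambda>(x, y). dist x y) | \<gamma>.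
      map_pmf fst \<gamma> = p \<and> map_pmf snd \<gamma> = q}"
  by (rule bdd_belowI[of _ 0]) (auto intro!: integral_nonneg_AE simp: case_prod_beta)

lemma wasserstein1_le_coupling:
  assumes "map_pmf fst \<gamma> = p" "map_pmf snd \<gamma> = q"
  shows "wasserstein1 p q \<le> measure_pmf.expectation \<gamma> (\<lambda>(x, y). dist x y)"
  unfolding wasserstein1_def
  by (rule cInf_lower[OF _ bdd_below_coupling_costs]) (use assms in blast)

lemma wasserstein1_near_optimal_coupling:
  assumes "e > 0"
  obtains \<gamma> where "map_pmf fst \<gamma> = p" "map_pmf snd \<gamma> = q"
    "measure_pmf.expectation \<gamma> (\<lambda>(x, y). dist x y) < wasserstein1 p q + e"
proof -
  have "{measure_pmf.expectation \<gamma> (\<lambda>(x, y). dist x y) | \<gamma>.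
      map_pmf fst \<gamma> = p \<and> map_pmf snd \<gamma> = q} \<noteq> {}"
    by (auto intro!: exI[of _ "pair_pmf p q"] simp: map_fst_pair_pmf map_snd_pair_pmf)
  moreover have "wasserstein1 p q < wasserstein1 p q + e"
    using assms by simp
  ultimately show ?thesis
    using that unfolding wasserstein1_def
    by (subst (asm) cInf_less_iff[OF _ bdd_below_coupling_costs]) auto
qed

lemma finite_set_pmf_coupling:
  assumes "map_pmf fst \<gamma> = p" "map_pmf snd \<gamma> = q" "finite (set_pmf p)" "finite (set_pmf q)"
  shows "finite (set_pmf \<gamma>)"
proof (rule finite_subset)
  show "set_pmf \<gamma> \<subseteq> set_pmf p \<times> set_pmf q"
    using assms(1,2) by force
qed (use assms(3,4) in blast)

lemma pmf_expectation_swap: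
  fixes h :: "'a \<Rightarrow> 'b \<Rightarrow> real"
  assumes "finite (set_pmf p)" "finite (set_pmf q)"
  shows "measure_pmf.expectation p (\<lambda>x. measure_pmf.expectation q (h x))
       = measure_pmf.expectation q (\<lambda>y. measure_pmf.expectation p (\<lambda>x. h x y))"
  by (simp add: integral_measure_pmf[OF assms(1)] integral_measure_pmf[OF assms(2)]
      sum_distrib_left mult.left_commute sum.swap[of _ "set_pmf p"])

lemma wasserstein1_bind_le:
  fixes p :: "'a::metric_space pmf"
  assumes p: "finite (set_pmf p)" and A: "finite (set_pmf A)"
    and M: "\<And>a. a \<in> set_pmf A \<Longrightarrow> finite (set_pmf (M a))"
  shows "wasserstein1 p (A \<bind> M) \<le> measure_pmf.expectation A (\<lambda>a. wasserstein1 p (M a))"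
proof (rule field_le_epsilon)
  fix e :: real
  assume "e > 0"
  then have "\<forall>a. \<exists>\<gamma>. map_pmf fst \<gamma> = p \<and> map_pmf snd \<gamma> = M a \<and>
      measure_pmf.expectation \<gamma> (\<lambda>(x, y). dist x y) < wasserstein1 p (M a) + e"
    by (metis wasserstein1_near_optimal_coupling)
  then obtain \<gamma> where \<gamma>: "\<And>a. map_pmf fst (\<gamma> a) = p" "\<And>a. map_pmf snd (\<gamma> a) = M a"
    "\<And>a. measure_pmf.expectation (\<gamma> a) (\<lambda>(x, y). dist x y) < wasserstein1 p (M a) + e"
    by metis
  have fin_\<gamma>: "finite (set_pmf (\<gamma> a))" if "a \<in> set_pmf A" for a
    using finite_set_pmf_coupling[OF \<gamma>(1,2) p M[OF that]] .
  have "map_pmf fst (A \<bind> \<gamma>) = p" "map_pmf snd (A \<bind> \<gamma>) = A \<bind> M"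
    by (simp_all add: map_bind_pmf \<gamma>(1,2))
  then have "wasserstein1 p (A \<bind> M) \<le> measure_pmf.expectation (A \<bind> \<gamma>) (\<lambda>(x, y). dist x y)"
    by (rule wasserstein1_le_coupling)
  also have "\<dots> = measure_pmf.expectation A (\<lambda>a. measure_pmf.expectation (\<gamma> a) (\<lambda>(x, y). dist x y))"
    using A fin_\<gamma> by (simp add: pmf_expectation_bind[of "set_pmf A"] integral_measure_pmf[OF A])
  also have "\<dots> \<le> measure_pmf.expectation A (\<lambda>a. wasserstein1 p (M a) + e)"
    using A \<gamma>(3) by (intro integral_mono integrable_measure_pmf_finite less_imp_le)
  also have "\<dots> = measure_pmf.expectation A (\<lambda>a. wasserstein1 p (M a)) + e"
    using A by (simp add: integrable_measure_pmf_finite)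
  finally show "wasserstein1 p (A \<bind> M) \<le> measure_pmf.expectation A (\<lambda>a. wasserstein1 p (M a)) + e" .
qed

definition uniform_permutation :: "'a set \<Rightarrow> ('a \<Rightarrow> 'a) pmf" where
  "uniform_permutation S = pmf_of_set {\<sigma>. \<sigma> permutes S}"

lemma set_pmf_uniform_permutation:
  "finite S \<Longrightarrow> set_pmf (uniform_permutation S) = {\<sigma>. \<sigma> permutes S}"
  unfolding uniform_permutation_def
  by (auto intro!: set_pmf_of_set finite_permutations permutes_id)

lemma finite_set_pmf_uniform_permutation:
  "finite S \<Longrightarrow> finite (set_pmf (uniform_permutation S))"
  by (simp add: set_pmf_uniform_permutation finite_permutations)

lemma map_pmf_uniform_permutation_compose_left:
  assumes "finite S" "\<rho> permutes S"
  shows "map_pmf (\<lambda>\<sigma>. \<rho> \<circ> \<sigma>) (uniform_permutation S) = uniform_permutation S"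
  unfolding uniform_permutation_def
proof (rule map_pmf_of_set_bij_betw)
  show "bij_betw (\<lambda>\<sigma>. \<rho> \<circ> \<sigma>) {\<sigma>. \<sigma> permutes S} {\<sigma>. \<sigma> permutes S}"
    by (rule bij_betw_byWitness[where f' = "\<lambda>\<sigma>. inv \<rho> \<circ> \<sigma>"])
      (auto simp: o_assoc permutes_inv_o[OF assms(2)] assms permutes_compose permutes_inv)
qed (auto intro: permutes_id finite_permutations assms)

lemma map_pmf_uniform_permutation_compose_right:
  assumes "finite S" "\<rho> permutes S"
  shows "map_pmf (\<lambda>\<sigma>. \<sigma> \<circ> \<rho>) (uniform_permutation S) = uniform_permutation S"
  unfolding uniform_permutation_def
proof (rule map_pmf_of_set_bij_betw)
  show "bij_betw (\<lambda>\<sigma>. \<sigma> \<circ> \<rho>) {\<sigma>. \<sigma> permutes S} {\<sigma>. \<sigma> permutes S}"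
    by (rule bij_betw_byWitness[where f' = "\<lambda>\<sigma>. \<sigma> \<circ> inv \<rho>"])
      (auto simp: o_assoc[symmetric] permutes_inv_o[OF assms(2)] assms permutes_compose permutes_inv)
qed (auto intro: permutes_id finite_permutations assms)

lemma eq_pmf_of_setI:
  assumes "finite B" "set_pmf p \<subseteq> B" "\<And>x y. x \<in> B \<Longrightarrow> y \<in> B \<Longrightarrow> pmf p x = pmf p y"
  shows "p = pmf_of_set B"
proof -
  obtain x0 where x0: "x0 \<in> B"
    using assms(2) set_pmf_not_empty[of p] by blast
  have "card B * pmf p x0 = (\<Sum>x\<in>B. pmf p x)"
    using assms(3)[OF _ x0] by simp
  also have "\<dots> = 1"
    using sum_pmf_eq_1[OF assms(1,2)] .
  finally have "card B * pmf p x0 = 1" .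
  moreover have "card B > 0"
    using assms(1) x0 card_gt_0_iff by blast
  ultimately have pmf_x0: "pmf p x0 = 1 / card B"
    by (simp add: field_simps)
  show ?thesis
  proof (rule pmf_eqI)
    fix x
    show "pmf p x = pmf (pmf_of_set B) x"
    proof (cases "x \<in> B")
      case True
      then show ?thesis
        using assms(1) x0 assms(3)[OF True x0] pmf_x0
        by (subst pmf_of_set) auto
    next
      case False
      then show ?thesis
        using assms(1,2) x0 by (subst pmf_of_set) (auto simp: pmf_eq_0_set_pmf)
    qed
  qed
qed

lemma map_pmf_uniform_permutation_apply:
  assumes "finite S" "x \<in> S"
  shows "map_pmf (\<lambda>\<sigma>. \<sigma> x) (uniform_permutation S) = pmf_of_set S"
proof (rule eq_pmf_of_setI)
  let ?p = "map_pmf (\<lambda>\<sigma>. \<sigma> x) (uniform_permutation S)"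
  show "set_pmf ?p \<subseteq> S"
    using assms by (auto simp: set_pmf_uniform_permutation permutes_in_image)
  fix y z
  assume "y \<in> S" "z \<in> S"
  let ?\<tau> = "Transposition.transpose y z"
  have \<tau>: "?\<tau> permutes S"
    using \<open>y \<in> S\<close> \<open>z \<in> S\<close> by (rule permutes_swap_id)
  have "map_pmf ?\<tau> ?p = map_pmf (\<lambda>\<sigma>. \<sigma> x) (map_pmf (\<lambda>\<sigma>. ?\<tau> \<circ> \<sigma>) (uniform_permutation S))"
    by (simp add: map_pmf_comp)
  also have "\<dots> = ?p"
    by (simp add: map_pmf_uniform_permutation_compose_left[OF assms(1) \<tau>])
  finally have invariant: "map_pmf ?\<tau> ?p = ?p" .
  have "pmf ?p (?\<tau> y) = pmf ?p y"
    using pmf_map_inj'[OF bij_is_inj[OF bij_transpose], of y z ?p y] invariant by simp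
  then show "pmf ?p y = pmf ?p z"
    by simp
qed (use assms in simp)

lemma exists_permutes_image_eq:
  assumes "finite S" "A \<subseteq> S" "B \<subseteq> S" "card A = card B"
  obtains \<pi> where "\<pi> permutes S" "\<pi> ` A = B"
proof -
  have fin: "finite A" "finite B"
    using assms finite_subset by auto
  obtain g where g: "bij_betw g A B"
    using finite_same_card_bij[OF fin assms(4)] by blast
  have "card (S - A) = card (S - B)"
    using assms fin by (simp add: card_Diff_subset)
  then obtain h where h: "bij_betw h (S - A) (S - B)"
    using finite_same_card_bij assms(1) by (metis finite_Diff)
  define u where "u x = (if x \<in> A then g x else h x)" for x
  have "bij_betw u A B"
    using g by (rule bij_betw_cong[THEN iffD1, rotated]) (simp add: u_def)
  moreover have "bij_betw u (S - A) (S - B)"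
    using h by (rule bij_betw_cong[THEN iffD1, rotated]) (simp add: u_def)
  ultimately have "bij_betw u (A \<union> (S - A)) (B \<union> (S - B))"
    by (rule bij_betw_combine) blast
  then have "bij_betw u S S"
    using assms(2,3) by (simp add: Un_absorb1 Un_Diff_cancel)
  then have "restrict_id u S permutes S"
    by (rule permutes_restrict_id)
  moreover have "restrict_id u S ` A = B"
    using assms(2) g by (auto simp: restrict_id_def u_def bij_betw_def)
  ultimately show ?thesis
    using that by blast
qed

lemma map_pmf_uniform_permutation_image:
  assumes "finite S" "T \<subseteq> S"
  shows "map_pmf (\<lambda>\<sigma>. \<sigma> ` T) (uniform_permutation S) = pmf_of_set {T'. T' \<subseteq> S \<and> card T' = card T}"
proof (rule eq_pmf_of_setI)
  let ?p = "map_pmf (\<lambda>\<sigma>. \<sigma> ` T) (uniform_permutation S)"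
  show "finite {T'. T' \<subseteq> S \<and> card T' = card T}"
    using assms(1) by simp
  show "set_pmf ?p \<subseteq> {T'. T' \<subseteq> S \<and> card T' = card T}"
    using assms
    by (auto simp: set_pmf_uniform_permutation permutes_in_image card_image permutes_inj_on)
  fix T1 T2
  assume "T1 \<in> {T'. T' \<subseteq> S \<and> card T' = card T}" "T2 \<in> {T'. T' \<subseteq> S \<and> card T' = card T}"
  then obtain \<rho> where \<rho>: "\<rho> permutes S" "\<rho> ` T1 = T2"
    using exists_permutes_image_eq[OF assms(1)] by (metis (mono_tags, lifting) mem_Collect_eq)
  have "map_pmf (image \<rho>) ?p
      = map_pmf (\<lambda>\<sigma>. \<sigma> ` T) (map_pmf (\<lambda>\<sigma>. \<rho> \<circ> \<sigma>) (uniform_permutation S))"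
    by (simp add: map_pmf_comp image_comp)
  also have "\<dots> = ?p"
    by (simp add: map_pmf_uniform_permutation_compose_left[OF assms(1) \<rho>(1)])
  finally have invariant: "map_pmf (image \<rho>) ?p = ?p" .
  have "inj (image \<rho>)"
    using permutes_inj[OF \<rho>(1)] by (simp add: inj_on_def inj_image_eq_iff)
  then have "pmf ?p (\<rho> ` T1) = pmf ?p T1"
    using pmf_map_inj'[of "image \<rho>" ?p T1] invariant by simp
  then show "pmf ?p T1 = pmf ?p T2"
    using \<rho>(2) by simp
qed

lemma uniform_permutation_bind_map_pmf:
  assumes "finite S" "set_pmf p \<subseteq> S"
  shows "uniform_permutation S \<bind> (\<lambda>\<rho>. map_pmf \<rho> p) = pmf_of_set S"
proof -
  have "uniform_permutation S \<bind> (\<lambda>\<rho>. map_pmf \<rho> p)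
      = p \<bind> (\<lambda>x. map_pmf (\<lambda>\<rho>. \<rho> x) (uniform_permutation S))"
    by (simp add: map_pmf_def bind_commute_pmf[of "uniform_permutation S"])
  also have "\<dots> = p \<bind> (\<lambda>_. pmf_of_set S)"
    using assms by (intro bind_pmf_cong) (auto simp: map_pmf_uniform_permutation_apply)
  finally show ?thesis
    by simp
qed

lemma pmf_expectation_average_invariant:
  fixes \<phi> :: "'a \<Rightarrow> real"
  assumes p: "finite (set_pmf p)" and G: "finite (set_pmf G)"
    and invariant: "\<And>g. g \<in> set_pmf G \<Longrightarrow> map_pmf (act g) p = p"
  shows "measure_pmf.expectation p \<phi>
       = measure_pmf.expectation p (\<lambda>x. measure_pmf.expectation G (\<lambda>g. \<phi> (act g x)))"
proof -
  have "measure_pmf.expectation p \<phi> = measure_pmf.expectation G (\<lambda>g. measure_pmf.expectation p \<phi>)"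
    by simp
  also have "\<dots> = measure_pmf.expectation G (\<lambda>g. measure_pmf.expectation p (\<lambda>x. \<phi> (act g x)))"
    using invariant by (intro integral_cong_AE) (auto simp: AE_measure_pmf_iff simp flip: integral_map_pmf)
  also have "\<dots> = measure_pmf.expectation p (\<lambda>x. measure_pmf.expectation G (\<lambda>g. \<phi> (act g x)))"
    by (rule pmf_expectation_swap[OF G p])
  finally show ?thesis .
qed

lemma expectation_wasserstein1_uniform_le:
  fixes P :: "'b::metric_space pmf" and g :: "'a \<Rightarrow> 'b"
  assumes P: "finite (set_pmf P)" and S: "finite S" "T \<subseteq> S" and p: "set_pmf p \<subseteq> T"
  shows "measure_pmf.expectation (uniform_permutation S)
           (\<lambda>\<sigma>. wasserstein1 P (map_pmf (g \<circ> \<sigma>) (pmf_of_set T)))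
       \<le> measure_pmf.expectation (uniform_permutation S) (\<lambda>\<sigma>. wasserstein1 P (map_pmf (g \<circ> \<sigma>) p))"
proof -
  define \<phi> where "\<phi> \<sigma> = wasserstein1 P (map_pmf (g \<circ> \<sigma>) p)" for \<sigma>
  have T: "finite T"
    using S finite_subset by blast
  then have fin_p: "finite (set_pmf p)"
    using p finite_subset by blast
  have "wasserstein1 P (map_pmf (g \<circ> \<sigma>) (pmf_of_set T))
      \<le> measure_pmf.expectation (uniform_permutation T) (\<lambda>\<rho>. \<phi> (\<sigma> \<circ> \<rho>))" for \<sigma>
  proof -
    have "map_pmf (g \<circ> \<sigma>) (pmf_of_set T)
        = uniform_permutation T \<bind> (\<lambda>\<rho>. map_pmf (g \<circ> (\<sigma> \<circ> \<rho>)) p)"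
      by (simp flip: uniform_permutation_bind_map_pmf[OF T p] add: map_bind_pmf map_pmf_comp o_def)
    then show ?thesis
      unfolding \<phi>_def using P T fin_p
      by (simp add: wasserstein1_bind_le finite_set_pmf_uniform_permutation)
  qed
  then have "measure_pmf.expectation (uniform_permutation S)
           (\<lambda>\<sigma>. wasserstein1 P (map_pmf (g \<circ> \<sigma>) (pmf_of_set T)))
      \<le> measure_pmf.expectation (uniform_permutation S)
           (\<lambda>\<sigma>. measure_pmf.expectation (uniform_permutation T) (\<lambda>\<rho>. \<phi> (\<sigma> \<circ> \<rho>)))"
    using S by (intro integral_mono integrable_measure_pmf_finite finite_set_pmf_uniform_permutation)
  also have "\<dots> = measure_pmf.expectation (uniform_permutation S) \<phi>"
  proof (rule pmf_expectation_average_invariant[symmetric])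
    fix \<rho>
    assume "\<rho> \<in> set_pmf (uniform_permutation T)"
    then have "\<rho> permutes S"
      using T S(2) by (auto simp: set_pmf_uniform_permutation intro: permutes_subset)
    then show "map_pmf (\<lambda>\<sigma>. \<sigma> \<circ> \<rho>) (uniform_permutation S) = uniform_permutation S"
      by (rule map_pmf_uniform_permutation_compose_right[OF S(1)])
  qed (use S T in \<open>simp_all add: finite_set_pmf_uniform_permutation\<close>)
  finally show ?thesis
    unfolding \<phi>_def .
qed

lemma emp_dist_image_mset_set:
  assumes "finite A" "A \<noteq> {}"
  shows "emp_dist f (image_mset g (mset_set A)) = map_pmf (f \<circ> g) (pmf_of_set A)"
  unfolding emp_dist_def using assms by (simp add: map_pmf_of_set[symmetric] map_pmf_comp o_def)

definition repl_draws :: "nat \<Rightarrow> nat \<Rightarrow> (nat \<Rightarrow> nat) pmf" where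
  "repl_draws k n = Pi_pmf {0..<k} 0 (\<lambda>_. pmf_of_set {1..n})"

lemma repl_multisets_eq_map_pmf_repl_draws:
  "repl_multisets k n = map_pmf (\<lambda>v. image_mset v (mset_set {0..<k})) (repl_draws k n)"
  by (simp add: repl_multisets_def repl_draws_def)

lemma set_pmf_repl_draws:
  "1 \<le> n \<Longrightarrow> set_pmf (repl_draws k n) = PiE_dflt {0..<k} 0 (\<lambda>_. {1..n})"
  by (simp add: repl_draws_def set_Pi_pmf o_def)

lemma map_pmf_compose_permutes_repl_draws:
  assumes "1 \<le> n" "\<sigma> permutes {1..n}"
  shows "map_pmf (\<lambda>v. \<sigma> \<circ> v) (repl_draws k n) = repl_draws k n"
proof -
  have "map_pmf \<sigma> (pmf_of_set {1..n}) = pmf_of_set {1..n}"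
    using assms by (intro map_pmf_of_set_bij_betw permutes_imp_bij) auto
  moreover have "\<sigma> 0 = 0"
    using assms(2) by (rule permutes_not_in) simp
  ultimately show ?thesis
    using Pi_pmf_map[of "{0..<k}" \<sigma> 0 0 "\<lambda>_. pmf_of_set {1..n}"] by (simp add: repl_draws_def)
qed

lemma expectation_unif_subsets_emp_dist:
  fixes \<phi> :: "'a pmf \<Rightarrow> real"
  assumes "T \<subseteq> {1..n}" "card T = k" "1 \<le> k"
  shows "measure_pmf.expectation (unif_subsets k n) (\<lambda>S. \<phi> (emp_dist f (mset_set S)))
       = measure_pmf.expectation (uniform_permutation {1..n}) (\<lambda>\<sigma>. \<phi> (map_pmf (f \<circ> \<sigma>) (pmf_of_set T)))"
proof -
  have "unif_subsets k n = map_pmf (\<lambda>\<sigma>. \<sigma> ` T) (uniform_permutation {1..n})"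
    using assms by (simp add: unif_subsets_def map_pmf_uniform_permutation_image)
  moreover have "emp_dist f (mset_set (\<sigma> ` T)) = map_pmf (f \<circ> \<sigma>) (pmf_of_set T)"
    if "\<sigma> \<in> set_pmf (uniform_permutation {1..n})" for \<sigma>
  proof -
    have "inj_on \<sigma> T"
      using that by (auto simp: set_pmf_uniform_permutation permutes_inj_on)
    moreover have "finite T" "T \<noteq> {}"
      using assms finite_subset by auto
    ultimately show ?thesis
      by (simp flip: image_mset_mset_set add: emp_dist_image_mset_set)
  qed
  ultimately show ?thesis
    by (auto intro: integral_cong_AE simp: AE_measure_pmf_iff)
qed

lemma expectation_repl_multisets_emp_dist:
  fixes \<phi> :: "'a pmf \<Rightarrow> real"
  assumes "1 \<le> k" "1 \<le> n"
  shows "measure_pmf.expectation (repl_multisets k n) (\<lambda>S. \<phi> (emp_dist f S))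
       = measure_pmf.expectation (repl_draws k n) (\<lambda>v. measure_pmf.expectation (uniform_permutation {1..n})
           (\<lambda>\<sigma>. \<phi> (map_pmf (f \<circ> \<sigma>) (map_pmf v (pmf_of_set {0..<k})))))"
proof -
  have "measure_pmf.expectation (repl_multisets k n) (\<lambda>S. \<phi> (emp_dist f S))
      = measure_pmf.expectation (repl_draws k n) (\<lambda>v. \<phi> (map_pmf (f \<circ> v) (pmf_of_set {0..<k})))"
    using assms by (simp add: repl_multisets_eq_map_pmf_repl_draws emp_dist_image_mset_set)
  also have "\<dots> = measure_pmf.expectation (repl_draws k n) (\<lambda>v. measure_pmf.expectation (uniform_permutation {1..n})
           (\<lambda>\<sigma>. \<phi> (map_pmf (f \<circ> (\<sigma> \<circ> v)) (pmf_of_set {0..<k}))))"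
    using assms
    by (intro pmf_expectation_average_invariant)
      (auto simp: set_pmf_repl_draws finite_permutations set_pmf_uniform_permutation
        map_pmf_compose_permutes_repl_draws)
  finally show ?thesis
    by (simp add: map_pmf_comp comp_def)
qed

lemma expectation_unif_subsets_le_symmetrized_draw:
  fixes P :: "'a::metric_space pmf"
  assumes "1 \<le> k" "k \<le> n" "finite (set_pmf P)" "v ` {0..<k} \<subseteq> {1..n}"
  shows "measure_pmf.expectation (unif_subsets k n) (\<lambda>S. wasserstein1 P (emp_dist f (mset_set S)))
       \<le> measure_pmf.expectation (uniform_permutation {1..n})
           (\<lambda>\<sigma>. wasserstein1 P (map_pmf (f \<circ> \<sigma>) (map_pmf v (pmf_of_set {0..<k}))))"
proof -
  have "card (v ` {0..<k}) \<le> k"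
    using card_image_le[of "{0..<k}" v] by simp
  then obtain T where T: "v ` {0..<k} \<subseteq> T" "T \<subseteq> {1..n}" "card T = k"
    using exists_subset_between[of "v ` {0..<k}" k "{1..n}"] assms by auto
  have "set_pmf (map_pmf v (pmf_of_set {0..<k})) \<subseteq> T"
    using T(1) assms by auto
  then show ?thesis
    using assms T
    by (simp add: expectation_unif_subsets_emp_dist expectation_wasserstein1_uniform_le)
qed

theorem lemma2p3:
  fixes f :: "nat \<Rightarrow> 'a::metric_space" and n k :: nat
  assumes "1 \<le> k" and "k \<le> n"
  shows "measure_pmf.expectation (unif_subsets k n)
           (\<lambda>S. wasserstein1 (emp_dist f (mset_set {1..n})) (emp_dist f (mset_set S)))
         \<le> measure_pmf.expectation (repl_multisets k n)
           (\<lambda>S. wasserstein1 (emp_dist f (mset_set {1..n})) (emp_dist f S))"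
proof -
  define P where "P = emp_dist f (mset_set {1..n})"
  let ?lhs = "measure_pmf.expectation (unif_subsets k n) (\<lambda>S. wasserstein1 P (emp_dist f (mset_set S)))"
  let ?symmetrized = "\<lambda>v. measure_pmf.expectation (uniform_permutation {1..n})
    (\<lambda>\<sigma>. wasserstein1 P (map_pmf (f \<circ> \<sigma>) (map_pmf v (pmf_of_set {0..<k}))))"
  have P: "finite (set_pmf P)"
    using emp_dist_image_mset_set[of "{1..n}" f id] assms by (simp add: P_def)
  have "AE v in repl_draws k n. ?lhs \<le> ?symmetrized v"
  proof (rule AE_pmfI)
    fix v
    assume "v \<in> set_pmf (repl_draws k n)"
    then have "v ` {0..<k} \<subseteq> {1..n}"
      using assms by (auto simp: set_pmf_repl_draws PiE_dflt_def)
    then show "?lhs \<le> ?symmetrized v"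
      by (rule expectation_unif_subsets_le_symmetrized_draw[OF assms P])
  qed
  then have "?lhs \<le> measure_pmf.expectation (repl_draws k n) ?symmetrized"
    using assms
    by (intro measure_pmf.integral_ge_const integrable_measure_pmf_finite) (auto simp: set_pmf_repl_draws)
  also have "\<dots> = measure_pmf.expectation (repl_multisets k n) (\<lambda>S. wasserstein1 P (emp_dist f S))"
    using assms by (simp add: expectation_repl_multisets_emp_dist)
  finally show ?thesis
    unfolding P_def .
qed

end
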